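(* Let $S_1,\dots,S_n$ be real scores, $\alpha\in(0,1)$, $r=\lceil(1-\alpha)(n+1)\rceil$, and let $m_n\ge 0$ be an integer with $r+m_n\le n$. Let $[a,b]$ be a range with $b\ge \max_{1\le i\le n}S_i$, let $N\ge 1$ be an integer, $\sigma>0$, and $\beta\in(0,1)$. Let $\hat q$ be the output of the Buffered DP Right-Endpoint Binary Search (described in the context) run with these inputs. Then, with probability at least $1-\beta$ (over the Gaussian noise, conditionally on the scores), $\hat q\ge S_{(r+m_n)}$, where $S_{(k)}$ denotes the $k$-th smallest of $S_1,\dots,S_n$.
   Context: Notation: $C_n(t):=\sum_{i=1}^n \mathbb 1\{S_i\le t\}$ is the empirical count function; $\Phi$ is the standard normal CDF. Buffered DP Right-Endpoint Binary Search (Algorithm 2): input scores $S_1,\dots,S_n$, range $[a,b]$, miscoverage level $\alpha$, buffer $m_n$, number of steps $N$, noise scale $\sigma$, failure probability $\beta$. Set $r=\lceil(1-\alpha)(n+1)\rceil$, $\tau=\sigma\Phi^{-1}(1-\beta/N)-1$, $r'=r+m_n+\tau$, $\texttt{left}=a$, $\texttt{right}=b$. For $k=1,\dots,N$: set $\texttt{mid}=(\texttt{left}+\texttt{right})/2$; draw $Z_k\sim\mathcal N(0,\sigma^2)$ independently of everything else (including previous steps) and compute $\tilde C_k=C_n(\texttt{mid})+Z_k$; if $\tilde C_k\ge r'$ set $\texttt{right}=\texttt{mid}$, otherwise set $\texttt{left}=\texttt{mid}$. Output $\hat q=\texttt{right}$. *)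

theory Defs
  imports "HOL-Probability.Probability"
begin

definition Phi :: "real \<Rightarrow> real" where
  "Phi x = cdf (density lborel std_normal_density) x"

definition Phi_inv :: "real \<Rightarrow> real" where
  "Phi_inv p = (THE x. Phi x = p)"

definition emp_count :: "nat \<Rightarrow> (nat \<Rightarrow> real) \<Rightarrow> real \<Rightarrow> nat" where
  "emp_count n S t = card {i \<in> {1..n}. S i \<le> t}"

definition order_stat :: "nat \<Rightarrow> (nat \<Rightarrow> real) \<Rightarrow> nat \<Rightarrow> real" where
  "order_stat n S k = sort (map S [1..<n+1]) ! (k - 1)"

fun bs_state :: "(real \<Rightarrow> real) \<Rightarrow> real \<Rightarrow> (nat \<Rightarrow> real) \<Rightarrow> real \<Rightarrow> real \<Rightarrow> nat \<Rightarrow> real \<times> real" where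
  "bs_state C r' z a b 0 = (a, b)"
| "bs_state C r' z a b (Suc k) =
     (let (l, rt) = bs_state C r' z a b k; mid = (l + rt) / 2
      in if C mid + z k \<ge> r' then (l, mid) else (mid, rt))"

(* Algorithm 2: output q_hat as a function of the noise realisation z (z k = Z_{k+1}) *)
definition dp_bs_output :: "nat \<Rightarrow> (nat \<Rightarrow> real) \<Rightarrow> real \<Rightarrow> real \<Rightarrow> real \<Rightarrow> nat \<Rightarrow> nat \<Rightarrow> real \<Rightarrow> real \<Rightarrow> (nat \<Rightarrow> real) \<Rightarrow> real" where
  "dp_bs_output n S a b \<alpha> m N \<sigma> \<beta> z =
     (let r = \<lceil>(1 - \<alpha>) * (real n + 1)\<rceil>;
          \<tau> = \<sigma> * Phi_inv (1 - \<beta> / real N) - 1;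
          r' = real_of_int r + real m + \<tau>
      in snd (bs_state (\<lambda>t. real (emp_count n S t)) r' z a b N))"

definition noise_space :: "nat \<Rightarrow> real \<Rightarrow> (nat \<Rightarrow> real) measure" where
  "noise_space N \<sigma> = PiM {..<N} (\<lambda>_. density lborel (normal_density 0 \<sigma>))"

end

theory Submission
  imports Defs
begin

(* Let q be the (r + m)-th order statistic and x = Phi_inv (1 - beta / N). If every noise draw
   satisfies Z_k < sigma x, then at any midpoint t < q the count C_n(t) is at most r + m - 1, so
   the noisy count stays below the threshold r' = r + m + sigma x - 1 and the search moves its
   left endpoint; hence the right endpoint, which starts at b >= q, never drops below q. Each draw
   exceeds sigma x with probability 1 - Phi x = beta / N, so by the union bound the good event has
   probability at least 1 - beta. *)

lemma null_sets_normal_density: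
  assumes "\<sigma> > 0"
  shows "null_sets (density lborel (normal_density \<mu> \<sigma>)) = null_sets lborel"
proof (intro set_eqI)
  fix A
  have [simp]: "(x \<in> A \<longrightarrow> normal_density \<mu> \<sigma> x = 0) \<longleftrightarrow> x \<notin> A" for x
    using normal_density_pos[OF assms, of \<mu> x] by auto
  show "A \<in> null_sets (density lborel (normal_density \<mu> \<sigma>)) \<longleftrightarrow> A \<in> null_sets lborel"
    using AE_iff_null_sets[of A lborel] by (auto simp: null_sets_density_iff AE_not_in)
qed

lemma real_distribution_normal_density:
  "\<sigma> > 0 \<Longrightarrow> real_distribution (density lborel (normal_density \<mu> \<sigma>))"
  by (simp add: real_distribution_def real_distribution_axioms_def prob_space_normal_density)

abbreviation std_normal :: "real measure" where
  "std_normal \<equiv> density lborel std_normal_density"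

interpretation std_normal: real_distribution std_normal
  by (rule real_distribution_normal_density) simp

lemma std_normal_null_sets: "null_sets std_normal = null_sets lborel"
  by (rule null_sets_normal_density) simp

lemma isCont_Phi: "isCont Phi x"
proof -
  have "{x} \<in> null_sets std_normal"
    by (auto simp: std_normal_null_sets)
  then show ?thesis
    unfolding Phi_def[abs_def] by (simp add: std_normal.isCont_cdf measure_eq_0_null_sets)
qed

lemma Phi_strict_mono: "strict_mono Phi"
proof
  fix x y :: real assume "x < y"
  then have "{x<..y} \<notin> null_sets std_normal"
    by (auto simp: std_normal_null_sets)
  then have "measure std_normal {x<..y} > 0"
    by (auto simp: zero_less_measure_iff std_normal.emeasure_eq_measure)
  then show "Phi x < Phi y"
    using std_normal.cdf_diff_eq[OF \<open>x < y\<close>] unfolding Phi_def by linarith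
qed

lemma Phi_at_top: "(Phi \<longlongrightarrow> 1) at_top"
  unfolding Phi_def[abs_def] by (rule std_normal.cdf_lim_at_top_prob)

lemma Phi_at_bot: "(Phi \<longlongrightarrow> 0) at_bot"
  unfolding Phi_def[abs_def] by (rule std_normal.cdf_lim_at_bot)

lemma Phi_Phi_inv:
  assumes "0 < p" "p < 1"
  shows "Phi (Phi_inv p) = p"
proof -
  obtain u where "Phi u < p"
    using eventually_happens'[OF _ order_tendstoD(2)[OF Phi_at_bot assms(1)]] by auto
  moreover obtain v where "p < Phi v"
    using eventually_happens'[OF _ order_tendstoD(1)[OF Phi_at_top assms(2)]] by auto
  ultimately have "u \<le> v"
    using strict_mono_less_eq[OF Phi_strict_mono, of v u] by fastforce
  then obtain x where x: "Phi x = p"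
    using IVT[of Phi u p v] isCont_Phi \<open>Phi u < p\<close> \<open>p < Phi v\<close> by fastforce
  then have "Phi_inv p = x"
    unfolding Phi_inv_def using strict_mono_eq[OF Phi_strict_mono] by blast
  with x show ?thesis by simp
qed

lemma normal_density_upper_tail:
  assumes "\<sigma> > 0"
  shows "measure (density lborel (normal_density \<mu> \<sigma>)) {\<mu> + \<sigma> * x..} = 1 - Phi x"
proof -
  let ?M = "density lborel (normal_density \<mu> \<sigma>)" and ?T = "\<lambda>y. (y - \<mu>) / \<sigma>"
  interpret M: prob_space ?M using prob_space_normal_density assms .
  have "distributed ?M lborel (\<lambda>y. y) (normal_density \<mu> \<sigma>)"
    by (simp add: distributed_def distr_id2)
  then have "distributed ?M lborel ?T std_normal_density"
    using M.normal_standard_normal_convert[OF assms] by simp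
  then have T: "distr ?M lborel ?T = std_normal" "?T \<in> measurable ?M lborel"
    by (simp_all add: distributed_def)
  have "measure ?M {\<mu> + \<sigma> * x..} = measure ?M (?T -` {x..} \<inter> space ?M)"
    using assms by (intro arg_cong[where f="measure ?M"]) (auto simp: field_simps)
  also have "\<dots> = measure std_normal {x..}"
    using measure_distr[OF T(2), of "{x..}"] T(1) by simp
  also have "\<dots> = 1 - measure std_normal {..<x}"
    using std_normal.prob_compl[of "{..<x}"] by (simp add: Compl_eq_Diff_UNIV[symmetric])
  also have "measure std_normal {..<x} = measure std_normal ({..<x} \<union> {x})"
    by (rule measure_Un_null_set[symmetric]) (auto simp: std_normal_null_sets)
  also have "\<dots> = Phi x"
    unfolding ivl_disj_un_singleton Phi_def cdf_def ..
  finally show ?thesis .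
qed

lemma emp_count_eq_length_filter_sort:
  "emp_count n S t = length (filter (\<lambda>v. v \<le> t) (sort (map S [1..<n+1])))"
proof -
  have "emp_count n S t = card ({i. S i \<le> t} \<inter> set [1..<n+1])"
    unfolding emp_count_def by (rule arg_cong[where f=card]) auto
  also have "\<dots> = length (filter (\<lambda>i. S i \<le> t) [1..<n+1])"
    by (rule distinct_length_filter[symmetric]) simp
  also have "\<dots> = length (filter (\<lambda>v. v \<le> t) (map S [1..<n+1]))"
    by (simp add: filter_map comp_def)
  finally show ?thesis
    by (simp add: filter_sort)
qed

lemma emp_count_less_order_stat:
  assumes "1 \<le> k" "k \<le> n" "t < order_stat n S k"
  shows "emp_count n S t < k"
proof -
  define xs where "xs = sort (map S [1..<n+1])"
  have "drop (k - 1) xs = xs ! (k - 1) # drop k xs"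
    using assms(1,2) Cons_nth_drop_Suc[of "k - 1" xs] by (simp add: xs_def)
  moreover have "sorted (drop (k - 1) xs)"
    by (simp add: xs_def)
  ultimately have "\<forall>v \<in> set (drop (k - 1) xs). t < v"
    using assms(3) by (auto simp: xs_def order_stat_def intro: less_le_trans)
  then have "filter (\<lambda>v. v \<le> t) xs = filter (\<lambda>v. v \<le> t) (take (k - 1) xs)"
    by (subst append_take_drop_id[of "k - 1", symmetric], subst filter_append)
       (auto simp: filter_empty_conv)
  then have "emp_count n S t \<le> length (take (k - 1) xs)"
    by (metis emp_count_eq_length_filter_sort length_filter_le xs_def)
  with assms(1) show ?thesis by simp arith
qed

lemma order_stat_mem:
  assumes "1 \<le> k" "k \<le> n"
  shows "order_stat n S k \<in> S ` {1..n}"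
proof -
  have "order_stat n S k \<in> set (sort (map S [1..<n+1]))"
    unfolding order_stat_def using assms by (intro nth_mem) simp
  then show ?thesis by auto
qed

lemma borel_measurable_emp_count: "(\<lambda>t. real (emp_count n S t)) \<in> borel_measurable borel"
  unfolding emp_count_def by (intro borel_measurable_mono monoI of_nat_mono card_mono) auto

lemma snd_bs_state_ge:
  assumes "q \<le> b" "\<And>j t. j < k \<Longrightarrow> t < q \<Longrightarrow> C t + z j < r'"
  shows "q \<le> snd (bs_state C r' z a b k)"
  using assms(2)
proof (induction k)
  case 0
  then show ?case using assms(1) by simp
next
  case (Suc k)
  obtain l rt where lr: "bs_state C r' z a b k = (l, rt)" by fastforce
  have "q \<le> rt" using Suc lr by simp
  moreover have "q \<le> (l + rt) / 2" if "C ((l + rt) / 2) + z k \<ge> r'"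
    using Suc.prems[of k "(l + rt) / 2"] that by force
  ultimately show ?case by (simp add: lr Let_def)
qed

lemma bs_state_measurable:
  assumes "C \<in> borel_measurable borel" "\<And>j. j < k \<Longrightarrow> (\<lambda>z. z j) \<in> borel_measurable M"
  shows "(\<lambda>z. fst (bs_state C r' z a b k)) \<in> borel_measurable M
       \<and> (\<lambda>z. snd (bs_state C r' z a b k)) \<in> borel_measurable M"
  using assms(2)
proof (induction k)
  case 0
  then show ?case by simp
next
  case (Suc k)
  define l where "l = (\<lambda>z. fst (bs_state C r' z a b k))"
  define rt where "rt = (\<lambda>z. snd (bs_state C r' z a b k))"
  have "l \<in> borel_measurable M" "rt \<in> borel_measurable M" "(\<lambda>z. z k) \<in> borel_measurable M"
    using Suc by (auto simp: l_def rt_def)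
  then have mid: "(\<lambda>z. (l z + rt z) / 2) \<in> borel_measurable M"
    and step: "{z \<in> space M. C ((l z + rt z) / 2) + z k \<ge> r'} \<in> sets M"
    using measurable_compose[of "\<lambda>z. (l z + rt z) / 2" M borel C borel] assms(1) by measurable
  have "(\<lambda>z. fst (bs_state C r' z a b (Suc k)))
      = (\<lambda>z. if C ((l z + rt z) / 2) + z k \<ge> r' then l z else (l z + rt z) / 2)"
   and "(\<lambda>z. snd (bs_state C r' z a b (Suc k)))
      = (\<lambda>z. if C ((l z + rt z) / 2) + z k \<ge> r' then (l z + rt z) / 2 else rt z)"
    by (simp_all add: fun_eq_iff l_def rt_def Let_def split: prod.split)
  then show ?case
    using measurable_If[OF \<open>l \<in> _\<close> mid step] measurable_If[OF mid \<open>rt \<in> _\<close> step] by simp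
qed

lemma product_prob_space_normal_density:
  "\<sigma> > 0 \<Longrightarrow> product_prob_space (\<lambda>_. density lborel (normal_density \<mu> \<sigma>))"
  by (simp add: product_prob_space_def product_prob_space_axioms_def product_sigma_finite_def
      prob_space_normal_density prob_space_imp_sigma_finite)

lemma prob_space_noise_space:
  assumes "\<sigma> > 0"
  shows "prob_space (noise_space N \<sigma>)"
proof -
  interpret product_prob_space "\<lambda>_. density lborel (normal_density 0 \<sigma>)" "{..<N}"
    using product_prob_space_normal_density[OF assms] .
  show ?thesis
    unfolding noise_space_def by (rule P.prob_space_axioms)
qed

lemma noise_space_component_measurable:
  assumes "k < N"
  shows "(\<lambda>z. z k) \<in> borel_measurable (noise_space N \<sigma>)"
proof -
  have "(\<lambda>z. z k) \<in> measurable (noise_space N \<sigma>) (density lborel (normal_density 0 \<sigma>))"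
    unfolding noise_space_def using assms by (intro measurable_component_singleton) auto
  moreover have "measurable (noise_space N \<sigma>) (density lborel (normal_density 0 \<sigma>))
      = borel_measurable (noise_space N \<sigma>)"
    by (rule measurable_cong_sets) simp_all
  ultimately show ?thesis
    by simp
qed

lemma noise_space_all_below:
  assumes "\<sigma> > 0"
  shows "1 - real N * (1 - Phi x)
    \<le> measure (noise_space N \<sigma>) {z \<in> space (noise_space N \<sigma>). \<forall>k<N. z k < \<sigma> * x}"
proof -
  let ?P = "noise_space N \<sigma>"
  interpret P: prob_space ?P using prob_space_noise_space[OF assms] .
  define B where "B k = {z \<in> space ?P. z k \<in> {\<sigma> * x..}}" for k
  have B_sets: "B k \<in> sets ?P" if "k < N" for k
    unfolding B_def using noise_space_component_measurable[OF that] by measurable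
  have B_measure: "measure ?P (B k) = 1 - Phi x" if "k < N" for k
  proof -
    have "emeasure ?P (B k) = emeasure (density lborel (normal_density 0 \<sigma>)) {\<sigma> * x..}"
      unfolding B_def noise_space_def using that
      by (intro product_prob_space.emeasure_PiM_Collect_single
          [OF product_prob_space_normal_density[OF assms]]) auto
    then show ?thesis
      using normal_density_upper_tail[OF assms, of 0 x] by (simp add: measure_def)
  qed
  have "measure ?P (\<Union>k<N. B k) \<le> (\<Sum>k<N. measure ?P (B k))"
    using B_sets by (intro P.finite_measure_subadditive_finite) (simp_all add: image_subset_iff)
  also have "\<dots> = real N * (1 - Phi x)"
    using B_measure by simp
  finally have union_bound: "measure ?P (\<Union>k<N. B k) \<le> real N * (1 - Phi x)" .
  have "(\<Union>k<N. B k) \<in> sets ?P"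
    by (intro sets.finite_UN) (auto intro: B_sets)
  then have "measure ?P (space ?P - (\<Union>k<N. B k)) = 1 - measure ?P (\<Union>k<N. B k)"
    by (rule P.prob_compl)
  moreover have "space ?P - (\<Union>k<N. B k) = {z \<in> space ?P. \<forall>k<N. z k < \<sigma> * x}"
    by (auto simp: B_def not_le)
  ultimately show ?thesis
    using union_bound by simp
qed

lemma dp_bs_output_measurable:
  "dp_bs_output n S a b \<alpha> m N \<sigma> \<beta> \<in> borel_measurable (noise_space N \<sigma>)"
proof -
  have "(\<lambda>z. snd (bs_state (\<lambda>t. real (emp_count n S t)) r' z a b N))
      \<in> borel_measurable (noise_space N \<sigma>)" for r'
    using bs_state_measurable[OF borel_measurable_emp_count noise_space_component_measurable]
    by blast
  then show ?thesis
    unfolding dp_bs_output_def Let_def .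
qed

lemma order_stat_le_dp_bs_output:
  assumes "0 < \<alpha>" "\<alpha> < 1"
    and "\<lceil>(1 - \<alpha>) * (real n + 1)\<rceil> + int m \<le> int n"
    and "\<forall>i\<in>{1..n}. S i \<le> b"
    and "\<forall>k<N. z k < \<sigma> * Phi_inv (1 - \<beta> / real N)"
  shows "order_stat n S (nat \<lceil>(1 - \<alpha>) * (real n + 1)\<rceil> + m)
           \<le> dp_bs_output n S a b \<alpha> m N \<sigma> \<beta> z"
proof -
  define r where "r = \<lceil>(1 - \<alpha>) * (real n + 1)\<rceil>"
  define K where "K = nat r + m"
  have "r \<ge> 1" "r + int m \<le> int n"
    using assms(1-3) by (simp_all add: r_def)
  then have K: "1 \<le> K" "K \<le> n" "real K = real_of_int r + real m"
    by (auto simp: K_def)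
  have "order_stat n S K \<le> b"
    using order_stat_mem[OF K(1,2), of S] assms(4) by auto
  moreover have
    "real (emp_count n S t) + z j < real_of_int r + real m + (\<sigma> * Phi_inv (1 - \<beta> / N) - 1)"
    if "j < N" "t < order_stat n S K" for j t
    using emp_count_less_order_stat[OF K(1,2) that(2)] assms(5) that(1) K(3) by fastforce
  ultimately show ?thesis
    unfolding dp_bs_output_def Let_def r_def[symmetric] K_def[symmetric]
    by (rule snd_bs_state_ge)
qed

theorem lemma1:
  fixes n :: nat and S :: "nat \<Rightarrow> real" and \<alpha> a b \<sigma> \<beta> :: real and m N :: nat
  assumes "0 < \<alpha>" "\<alpha> < 1"
    and "\<lceil>(1 - \<alpha>) * (real n + 1)\<rceil> + int m \<le> int n"
    and "\<forall>i\<in>{1..n}. S i \<le> b"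
    and "N \<ge> 1" and "\<sigma> > 0" and "0 < \<beta>" "\<beta> < 1"
  shows "measure (noise_space N \<sigma>)
           {z \<in> space (noise_space N \<sigma>).
              dp_bs_output n S a b \<alpha> m N \<sigma> \<beta> z
                \<ge> order_stat n S (nat \<lceil>(1 - \<alpha>) * (real n + 1)\<rceil> + m)}
         \<ge> 1 - \<beta>"
proof -
  let ?P = "noise_space N \<sigma>" and ?q = "order_stat n S (nat \<lceil>(1 - \<alpha>) * (real n + 1)\<rceil> + m)"
  define x where "x = Phi_inv (1 - \<beta> / real N)"
  interpret P: prob_space ?P
    using prob_space_noise_space[OF assms(6)] .
  have "Phi x = 1 - \<beta> / real N"
    unfolding x_def using assms(5,7,8) by (intro Phi_Phi_inv) (auto simp: field_simps)
  then have "1 - \<beta> = 1 - real N * (1 - Phi x)"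
    using assms(5) by simp
  also have "\<dots> \<le> measure ?P {z \<in> space ?P. \<forall>k<N. z k < \<sigma> * x}"
    by (rule noise_space_all_below[OF assms(6)])
  also have "\<dots> \<le> measure ?P {z \<in> space ?P. dp_bs_output n S a b \<alpha> m N \<sigma> \<beta> z \<ge> ?q}"
    using order_stat_le_dp_bs_output[OF assms(1-4)] dp_bs_output_measurable
    by (intro P.finite_measure_mono) (auto simp: x_def)
  finally show ?thesis .
qed

end
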